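(* Assume the Lipschitz gradient assumption, $r_1>L_x$, $r_2>L_y$, and let $\{(x^t,y^t,z^t,v^t)\}$ be generated by DS-GDA with stepsizes $c,\alpha>0$ and $\beta,\mu\in(0,1)$. Then for every $t\ge0$: (i) $\|x^{t+1}-x(y^t,z^t,v^t)\|\le\sigma_6\|x^{t+1}-x^t\|$; (ii) $\|y^{t+1}-y(x^{t+1},z^t,v^t)\|\le\sigma_7\|y^{t+1}-y^t\|$; (iii) $\|y(z^t,v^t)-y^t\|\le\sigma_8\|y^t-y^t_+(z^t,v^t)\|$; (iv) $\|y^{t+1}-y^t_+(z^t,v^t)\|\le L_y\alpha\sigma_6\|x^t-x^{t+1}\|$, where $\sigma_6=\frac{2cr_1+1}{cr_1-cL_x}$, $\sigma_7=\frac{2\alpha r_2+1}{\alpha r_2-\alpha L_y}$, $\sigma_8=\frac{1+\alpha L_d}{\alpha(r_2-L_y)}$, $L_d=L_y\sigma_1+L_y+r_2$, $\sigma_1=\frac{L_y+r_1-L_x}{r_1-L_x}$.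
   Context: Let $\mathcal X\subset\mathbb R^n$, $\mathcal Y\subset\mathbb R^d$ be nonempty convex compact sets and $f:\mathbb R^n\times\mathbb R^d\to\mathbb R$ continuously differentiable. Lipschitz gradient assumption: there are $L_x,L_y>0$ such that for all $x,x'\in\mathcal X$, $y,y'\in\mathcal Y$, $\|\nabla_x f(x,y)-\nabla_x f(x',y')\|\le L_x(\|x-x'\|+\|y-y'\|)$ and $\|\nabla_y f(x,y)-\nabla_y f(x',y')\|\le L_y(\|x-x'\|+\|y-y'\|)$. $F(x,y,z,v)=f(x,y)+\frac{r_1}{2}\|x-z\|^2-\frac{r_2}{2}\|y-v\|^2$; $d(y,z,v)=\min_{x\in\mathcal X}F$ with unique minimizer $x(y,z,v)$; $h(x,z,v)=\max_{y\in\mathcal Y}F$ with unique maximizer $y(x,z,v)$; $y(z,v)=\arg\max_{y\in\mathcal Y}d(y,z,v)$. DS-GDA: given $x^0,y^0,z^0,v^0$, for $t\ge0$: $x^{t+1}=\mathrm{proj}_{\mathcal X}(x^t-c\nabla_xF(x^t,y^t,z^t,v^t))$; $y^{t+1}=\mathrm{proj}_{\mathcal Y}(y^t+\alpha\nabla_yF(x^{t+1},y^t,z^t,v^t))$; $z^{t+1}=z^t+\beta(x^{t+1}-z^t)$; $v^{t+1}=v^t+\mu(y^{t+1}-v^t)$. Also $y^t_+(z^t,v^t)=\mathrm{proj}_{\mathcal Y}(y^t+\alpha\nabla_yF(x(y^t,z^t,v^t),y^t,z^t,v^t))$. *)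

theory Defs
  imports "HOL-Analysis.Analysis"
begin

definition FF :: "('a::euclidean_space \<Rightarrow> 'b::euclidean_space \<Rightarrow> real) \<Rightarrow> real \<Rightarrow> real
    \<Rightarrow> 'a \<Rightarrow> 'b \<Rightarrow> 'a \<Rightarrow> 'b \<Rightarrow> real" where
  "FF f r1 r2 x y z v = f x y + r1 / 2 * (norm (x - z))\<^sup>2 - r2 / 2 * (norm (y - v))\<^sup>2"

definition xopt :: "('a::euclidean_space \<Rightarrow> 'b::euclidean_space \<Rightarrow> real) \<Rightarrow> real \<Rightarrow> real
    \<Rightarrow> 'a set \<Rightarrow> 'b \<Rightarrow> 'a \<Rightarrow> 'b \<Rightarrow> 'a" where
  "xopt f r1 r2 X y z v =
     (THE x. x \<in> X \<and> (\<forall>x'\<in>X. FF f r1 r2 x y z v \<le> FF f r1 r2 x' y z v))"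

definition yopt :: "('a::euclidean_space \<Rightarrow> 'b::euclidean_space \<Rightarrow> real) \<Rightarrow> real \<Rightarrow> real
    \<Rightarrow> 'b set \<Rightarrow> 'a \<Rightarrow> 'a \<Rightarrow> 'b \<Rightarrow> 'b" where
  "yopt f r1 r2 Y x z v =
     (THE y. y \<in> Y \<and> (\<forall>y'\<in>Y. FF f r1 r2 x y' z v \<le> FF f r1 r2 x y z v))"

definition dfun :: "('a::euclidean_space \<Rightarrow> 'b::euclidean_space \<Rightarrow> real) \<Rightarrow> real \<Rightarrow> real
    \<Rightarrow> 'a set \<Rightarrow> 'b \<Rightarrow> 'a \<Rightarrow> 'b \<Rightarrow> real" where
  "dfun f r1 r2 X y z v = (INF x\<in>X. FF f r1 r2 x y z v)"

definition yzv :: "('a::euclidean_space \<Rightarrow> 'b::euclidean_space \<Rightarrow> real) \<Rightarrow> real \<Rightarrow> real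
    \<Rightarrow> 'a set \<Rightarrow> 'b set \<Rightarrow> 'a \<Rightarrow> 'b \<Rightarrow> 'b" where
  "yzv f r1 r2 X Y z v =
     (THE y. y \<in> Y \<and> (\<forall>y'\<in>Y. dfun f r1 r2 X y' z v \<le> dfun f r1 r2 X y z v))"

end

theory Submission
  imports Defs
begin

text \<open>
  All four estimates come from one error bound for a projected gradient step: if \<open>H\<close> is
  \<open>m\<close>-strongly monotone and \<open>L\<close>-Lipschitz on a closed convex set and \<open>s\<close> solves the
  variational inequality of \<open>H\<close>, then \<open>p' = proj (p - c H p)\<close> satisfies
  \<open>\<parallel>p' - s\<parallel> \<le> (cL + 1)/(cm) \<parallel>p' - p\<parallel>\<close> and \<open>\<parallel>s - p\<parallel> \<le> (1 + cL)/(cm) \<parallel>p - p'\<parallel>\<close>.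
  By the descent lemma, \<open>F\<close> is \<open>(r1 - Lx)\<close>-strongly convex in \<open>x\<close> and \<open>(r2 - Ly)\<close>-strongly
  concave in \<open>y\<close>, which gives (i) and (ii) with \<open>H = \<nabla>\<^sub>xF\<close> and \<open>H = -\<nabla>\<^sub>yF\<close>.
  The minimizer \<open>x(y,z,v)\<close> is \<open>Ly/(r1 - Lx)\<close>-Lipschitz in \<open>y\<close>; comparing \<open>d\<close> at two points
  through the two minimizers shows that \<open>d\<close> is \<open>(r2 - Ly)\<close>-strongly concave with gradient
  \<open>\<nabla>\<^sub>yF(x(y,z,v), y)\<close>, which is \<open>Ld\<close>-Lipschitz; this gives (iii). Finally (iv) is the
  nonexpansiveness of the projection combined with (i).
\<close>

lemma increment_le_of_deriv_le_affine:
  fixes p p' :: "real \<Rightarrow> real"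
  assumes deriv: "\<And>s. (p has_real_derivative p' s) (at s)"
    and bound: "\<And>s. 0 \<le> s \<Longrightarrow> s \<le> 1 \<Longrightarrow> p' s \<le> K * s + M"
  shows "p 1 - p 0 \<le> K / 2 + M"
proof -
  define q where "q s = p s - K / 2 * s\<^sup>2 - M * s" for s
  have "q 1 \<le> q 0"
  proof (rule DERIV_nonpos_imp_nonincreasing[of 0 1 q])
    fix s :: real assume s: "0 \<le> s" "s \<le> 1"
    have "(q has_real_derivative (p' s - K / 2 * (2 * s) - M)) (at s)"
      unfolding q_def[abs_def] by (rule derivative_eq_intros deriv refl | simp)+
    moreover have "p' s - K / 2 * (2 * s) - M \<le> 0" using bound[OF s] by simp
    ultimately show "\<exists>y. (q has_real_derivative y) (at s) \<and> y \<le> 0" by blast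
  qed simp
  then show ?thesis unfolding q_def by simp
qed

lemma has_real_derivative_along_line:
  fixes \<phi> :: "'a::real_inner \<Rightarrow> real"
  assumes "\<And>p. (\<phi> has_derivative (\<lambda>h. g p \<bullet> h)) (at p)"
  shows "((\<lambda>s. \<phi> (u + s *\<^sub>R h)) has_real_derivative g (u + s *\<^sub>R h) \<bullet> h) (at s)"
proof -
  have "((\<lambda>s. u + s *\<^sub>R h) has_derivative (\<lambda>t. t *\<^sub>R h)) (at s)"
    by (rule derivative_eq_intros refl)+ simp
  from has_derivative_compose[OF this assms]
  have "((\<lambda>s. \<phi> (u + s *\<^sub>R h)) has_derivative (\<lambda>t. (g (u + s *\<^sub>R h) \<bullet> h) * t)) (at s)"
    by (simp add: o_def inner_scaleR_right mult.commute)
  then show ?thesis by (simp add: has_field_derivative_def)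
qed

lemma descent_lemma:
  fixes \<phi> :: "'a::real_inner \<Rightarrow> real"
  assumes deriv: "\<And>p. (\<phi> has_derivative (\<lambda>h. g p \<bullet> h)) (at p)"
    and S: "convex S" "u \<in> S" "w \<in> S"
    and lip: "\<And>p q. p \<in> S \<Longrightarrow> q \<in> S \<Longrightarrow> norm (g p - g q) \<le> L * norm (p - q)"
  shows "\<bar>\<phi> w - \<phi> u - g u \<bullet> (w - u)\<bar> \<le> L / 2 * (norm (w - u))\<^sup>2"
proof -
  define h where "h = w - u"
  have bound: "\<bar>g (u + s *\<^sub>R h) \<bullet> h - g u \<bullet> h\<bar> \<le> L * (norm h)\<^sup>2 * s"
    if s: "0 \<le> s" "s \<le> 1" for s
  proof -
    have "u + s *\<^sub>R h = (1 - s) *\<^sub>R u + s *\<^sub>R w" unfolding h_def by (simp add: algebra_simps)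
    then have mem: "u + s *\<^sub>R h \<in> S" using s convexD[OF S, of "1 - s" s] by simp
    have "\<bar>g (u + s *\<^sub>R h) \<bullet> h - g u \<bullet> h\<bar> \<le> norm (g (u + s *\<^sub>R h) - g u) * norm h"
      by (metis Cauchy_Schwarz_ineq2 inner_diff_left)
    also have "\<dots> \<le> L * norm (s *\<^sub>R h) * norm h"
      using lip[OF mem S(2)] by (simp add: mult_right_mono)
    finally show ?thesis using s by (simp add: power2_eq_square mult_ac)
  qed
  have deriv_line: "((\<lambda>s. \<phi> (u + s *\<^sub>R h)) has_real_derivative g (u + s *\<^sub>R h) \<bullet> h) (at s)" for s
    by (rule has_real_derivative_along_line[OF deriv])
  have "\<phi> (u + 1 *\<^sub>R h) - \<phi> (u + 0 *\<^sub>R h) \<le> L * (norm h)\<^sup>2 / 2 + g u \<bullet> h"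
    by (rule increment_le_of_deriv_le_affine[OF deriv_line]) (use bound in \<open>force simp: abs_le_iff\<close>)
  moreover have "- \<phi> (u + 1 *\<^sub>R h) - - \<phi> (u + 0 *\<^sub>R h) \<le> L * (norm h)\<^sup>2 / 2 + - (g u \<bullet> h)"
    by (rule increment_le_of_deriv_le_affine[OF DERIV_minus[OF deriv_line]])
      (use bound in \<open>force simp: abs_le_iff\<close>)
  ultimately show ?thesis unfolding abs_le_iff h_def by simp
qed

lemma nonneg_if_nonneg_up_to_quadratic:
  fixes a C :: real
  assumes "\<And>s. 0 < s \<Longrightarrow> s \<le> 1 \<Longrightarrow> 0 \<le> s * a + C * s\<^sup>2"
  shows "0 \<le> a"
proof (rule tendsto_lowerbound)
  show "((\<lambda>s. a + C * s) \<longlongrightarrow> a) (at_right 0)"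
    by (auto intro!: tendsto_eq_intros)
  have "0 \<le> a + C * s" if "0 < s" "s \<le> 1" for s
  proof -
    have "0 \<le> s * (a + C * s)" using assms[OF that] by (simp add: power2_eq_square algebra_simps)
    then show ?thesis using that by (simp add: zero_le_mult_iff)
  qed
  then show "\<forall>\<^sub>F s in at_right 0. 0 \<le> a + C * s"
    using eventually_at_right_real[of 0 1] by (auto elim: eventually_mono)
qed simp

lemma mult_le_of_mult_square_le:
  fixes e a b :: real
  assumes "0 \<le> e" "a * e\<^sup>2 \<le> b * e" "0 \<le> b"
  shows "a * e \<le> b"
  using assms by (cases "e = 0") (auto simp: power2_eq_square mult.assoc[symmetric])

text \<open>\<open>D\<close> plays the role of the gradient but is not required to be one: for the dual function
  \<open>d\<close> only these two-sided quadratic bounds are established.\<close>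

definition strongly_convex_smooth_on ::
    "'a::real_inner set \<Rightarrow> real \<Rightarrow> real \<Rightarrow> ('a \<Rightarrow> real) \<Rightarrow> ('a \<Rightarrow> 'a) \<Rightarrow> bool" where
  "strongly_convex_smooth_on S m M \<phi> D \<longleftrightarrow>
     (\<forall>a\<in>S. \<forall>b\<in>S. \<phi> a + D a \<bullet> (b - a) + m / 2 * (norm (b - a))\<^sup>2 \<le> \<phi> b
                 \<and> \<phi> b \<le> \<phi> a + D a \<bullet> (b - a) + M / 2 * (norm (b - a))\<^sup>2)"

lemma strongly_convex_smooth_onD:
  assumes "strongly_convex_smooth_on S m M \<phi> D" "a \<in> S" "b \<in> S"
  shows "\<phi> a + D a \<bullet> (b - a) + m / 2 * (norm (b - a))\<^sup>2 \<le> \<phi> b"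
    and "\<phi> b \<le> \<phi> a + D a \<bullet> (b - a) + M / 2 * (norm (b - a))\<^sup>2"
  using assms unfolding strongly_convex_smooth_on_def by blast+

lemma strongly_convex_smooth_on_minimizer_variational_ineq:
  assumes scs: "strongly_convex_smooth_on S m M \<phi> D" and "convex S"
    and a: "a \<in> S" and min: "\<forall>x\<in>S. \<phi> a \<le> \<phi> x" and q: "q \<in> S"
  shows "0 \<le> D a \<bullet> (q - a)"
proof (rule nonneg_if_nonneg_up_to_quadratic[where C = "M / 2 * (norm (q - a))\<^sup>2"])
  fix s :: real assume s: "0 < s" "s \<le> 1"
  have "a + s *\<^sub>R (q - a) = (1 - s) *\<^sub>R a + s *\<^sub>R q" by (simp add: algebra_simps)
  then have b: "a + s *\<^sub>R (q - a) \<in> S" using s convexD[OF \<open>convex S\<close> a q, of "1 - s" s] by simp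
  have "\<phi> a \<le> \<phi> (a + s *\<^sub>R (q - a))" using min b by blast
  also have "\<dots> \<le> \<phi> a + s * (D a \<bullet> (q - a)) + M / 2 * (norm (q - a))\<^sup>2 * s\<^sup>2"
    using strongly_convex_smooth_onD(2)[OF scs a b] s by (simp add: power_mult_distrib mult_ac)
  finally show "0 \<le> s * (D a \<bullet> (q - a)) + M / 2 * (norm (q - a))\<^sup>2 * s\<^sup>2" by simp
qed

lemma strongly_convex_smooth_on_minimizer_growth:
  assumes scs: "strongly_convex_smooth_on S m M \<phi> D" and "convex S"
    and a: "a \<in> S" and min: "\<forall>x\<in>S. \<phi> a \<le> \<phi> x" and b: "b \<in> S"
  shows "\<phi> a + m / 2 * (norm (b - a))\<^sup>2 \<le> \<phi> b"
  using strongly_convex_smooth_onD(1)[OF scs a b]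
    strongly_convex_smooth_on_minimizer_variational_ineq[OF assms] by linarith

lemma strongly_convex_smooth_on_unique_minimizer:
  assumes scs: "strongly_convex_smooth_on S m M \<phi> D" and "m > 0"
    and S: "compact S" "convex S" "S \<noteq> {}" and cont: "continuous_on S \<phi>"
  shows "\<exists>!a. a \<in> S \<and> (\<forall>x\<in>S. \<phi> a \<le> \<phi> x)"
proof -
  obtain a where a: "a \<in> S" "\<forall>x\<in>S. \<phi> a \<le> \<phi> x"
    using continuous_attains_inf[OF S(1,3) cont] by blast
  have "b = a" if b: "b \<in> S" "\<forall>x\<in>S. \<phi> b \<le> \<phi> x" for b
  proof -
    have "\<phi> a + m / 2 * (norm (b - a))\<^sup>2 \<le> \<phi> b"
      by (rule strongly_convex_smooth_on_minimizer_growth[OF scs S(2) a b(1)])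
    then have "m / 2 * (norm (b - a))\<^sup>2 \<le> 0" using a b by fastforce
    then show ?thesis using \<open>m > 0\<close> by (simp add: mult_le_0_iff)
  qed
  then show ?thesis using a by blast
qed

lemma strongly_convex_smooth_on_strongly_monotone:
  assumes scs: "strongly_convex_smooth_on S m M \<phi> D" and a: "a \<in> S" and b: "b \<in> S"
  shows "m * (norm (a - b))\<^sup>2 \<le> (D a - D b) \<bullet> (a - b)"
proof -
  have "D a \<bullet> (b - a) = - (D a \<bullet> (a - b))" "norm (b - a) = norm (a - b)"
    by (simp_all add: inner_diff_right norm_minus_commute)
  then show ?thesis
    using strongly_convex_smooth_onD(1)[OF scs a b] strongly_convex_smooth_onD(1)[OF scs b a]
    by (simp add: inner_diff_left)
qed

lemma closest_point_step_inner_le: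
  fixes g p :: "'a::euclidean_space" and c :: real
  assumes "convex S" "closed S" "s \<in> S"
  defines "p' \<equiv> closest_point S (p - c *\<^sub>R g)"
  shows "c * (g \<bullet> (p' - s)) \<le> (p - p') \<bullet> (p' - s)"
  using closest_point_dot[OF assms(1-3), of "p - c *\<^sub>R g"] unfolding p'_def[symmetric]
  by (simp add: inner_diff_left inner_diff_right inner_commute algebra_simps)

lemma projected_step_dist_solution_le:
  fixes H :: "'a::euclidean_space \<Rightarrow> 'a"
  assumes S: "convex S" "closed S"
    and sol: "s \<in> S" "\<And>q. q \<in> S \<Longrightarrow> 0 \<le> H s \<bullet> (q - s)"
    and p: "p \<in> S" and "c > 0" "m > 0" "L \<ge> 0"
    and mono: "\<And>a b. a \<in> S \<Longrightarrow> b \<in> S \<Longrightarrow> m * (norm (a - b))\<^sup>2 \<le> (H a - H b) \<bullet> (a - b)"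
    and lip: "\<And>a b. a \<in> S \<Longrightarrow> b \<in> S \<Longrightarrow> norm (H a - H b) \<le> L * norm (a - b)"
  defines "p' \<equiv> closest_point S (p - c *\<^sub>R H p)"
  shows "norm (p' - s) \<le> (c * L + 1) / (c * m) * norm (p' - p)"
proof -
  have p': "p' \<in> S" unfolding p'_def using S sol(1) closest_point_in_set by blast
  define e where "e = norm (p' - s)"
  define \<delta> where "\<delta> = norm (p' - p)"
  have proj: "c * (H p \<bullet> (p' - s)) \<le> (p - p') \<bullet> (p' - s)"
    unfolding p'_def by (rule closest_point_step_inner_le[OF S sol(1)])
  have "(p - p') \<bullet> (p' - s) \<le> \<delta> * e"
    using Cauchy_Schwarz_ineq2[of "p - p'" "p' - s"] unfolding \<delta>_def e_def
    by (simp add: norm_minus_commute abs_le_iff)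
  moreover have "(H p' - H p) \<bullet> (p' - s) \<le> L * \<delta> * e"
  proof -
    have "(H p' - H p) \<bullet> (p' - s) \<le> norm (H p' - H p) * e"
      using Cauchy_Schwarz_ineq2[of "H p' - H p" "p' - s"] unfolding e_def by (simp add: abs_le_iff)
    also have "\<dots> \<le> L * \<delta> * e"
      unfolding \<delta>_def e_def by (rule mult_right_mono[OF lip[OF p' p]]) simp
    finally show ?thesis .
  qed
  moreover have "m * e\<^sup>2 \<le> (H p' - H p) \<bullet> (p' - s) + H p \<bullet> (p' - s)"
    using mono[OF p' sol(1)] sol(2)[OF p'] unfolding e_def by (simp add: inner_diff_left)
  ultimately have "c * (m * e\<^sup>2) \<le> c * (L * \<delta> * e) + \<delta> * e"
    using proj mult_left_mono[of _ _ c] \<open>c > 0\<close> by (smt (verit) distrib_left)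
  then have "(c * m) * e\<^sup>2 \<le> ((c * L + 1) * \<delta>) * e" by (simp add: algebra_simps)
  then have "(c * m) * e \<le> (c * L + 1) * \<delta>"
    using mult_le_of_mult_square_le[of e] \<open>c > 0\<close> \<open>L \<ge> 0\<close> unfolding e_def \<delta>_def by simp
  then show ?thesis
    using \<open>c > 0\<close> \<open>m > 0\<close> unfolding e_def \<delta>_def by (simp add: pos_le_divide_eq mult.commute)
qed

lemma dist_solution_le_projected_residual:
  fixes H :: "'a::euclidean_space \<Rightarrow> 'a"
  assumes S: "convex S" "closed S"
    and sol: "s \<in> S" "\<And>q. q \<in> S \<Longrightarrow> 0 \<le> H s \<bullet> (q - s)"
    and p: "p \<in> S" and "c > 0" "m > 0" "L \<ge> 0"
    and mono: "\<And>a b. a \<in> S \<Longrightarrow> b \<in> S \<Longrightarrow> m * (norm (a - b))\<^sup>2 \<le> (H a - H b) \<bullet> (a - b)"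
    and lip: "\<And>a b. a \<in> S \<Longrightarrow> b \<in> S \<Longrightarrow> norm (H a - H b) \<le> L * norm (a - b)"
  defines "p' \<equiv> closest_point S (p - c *\<^sub>R H p)"
  shows "norm (s - p) \<le> (1 + c * L) / (c * m) * norm (p - p')"
proof -
  have p': "p' \<in> S" unfolding p'_def using S sol(1) closest_point_in_set by blast
  define e where "e = norm (s - p)"
  define \<delta> where "\<delta> = norm (p - p')"
  have proj: "c * (H p \<bullet> (p' - s)) \<le> (p - p') \<bullet> (p' - s)"
    unfolding p'_def by (rule closest_point_step_inner_le[OF S sol(1)])
  have "(p - p') \<bullet> (p' - s) = (p - p') \<bullet> (p - s) - \<delta>\<^sup>2"
    unfolding \<delta>_def power2_norm_eq_inner by (simp add: inner_diff_right)
  moreover have "(p - p') \<bullet> (p - s) \<le> \<delta> * e"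
    using Cauchy_Schwarz_ineq2[of "p - p'" "p - s"] unfolding \<delta>_def e_def
    by (simp add: norm_minus_commute abs_le_iff)
  moreover have "(H p - H s) \<bullet> (p - p') \<le> L * e * \<delta>"
  proof -
    have "(H p - H s) \<bullet> (p - p') \<le> norm (H p - H s) * \<delta>"
      using Cauchy_Schwarz_ineq2[of "H p - H s" "p - p'"] unfolding \<delta>_def by (simp add: abs_le_iff)
    also have "\<dots> \<le> L * e * \<delta>"
      unfolding \<delta>_def e_def
      by (rule mult_right_mono) (use lip[OF p sol(1)] in \<open>simp_all add: norm_minus_commute\<close>)
    finally show ?thesis .
  qed
  moreover have "m * e\<^sup>2 \<le> H p \<bullet> (p' - s) + (H p - H s) \<bullet> (p - p')"
    using mono[OF p sol(1)] sol(2)[OF p'] unfolding e_def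
    by (simp add: norm_minus_commute inner_diff_left inner_diff_right)
  ultimately have "c * (m * e\<^sup>2) \<le> c * (L * e * \<delta>) + \<delta> * e"
    using proj mult_left_mono[of _ _ c] \<open>c > 0\<close> by (smt (verit) distrib_left zero_le_power2)
  then have "(c * m) * e\<^sup>2 \<le> ((1 + c * L) * \<delta>) * e" by (simp add: algebra_simps)
  then have "(c * m) * e \<le> (1 + c * L) * \<delta>"
    using mult_le_of_mult_square_le[of e] \<open>c > 0\<close> \<open>L \<ge> 0\<close> unfolding e_def \<delta>_def by simp
  then show ?thesis
    using \<open>c > 0\<close> \<open>m > 0\<close> unfolding e_def \<delta>_def by (simp add: pos_le_divide_eq mult.commute)
qed

definition FF_grad_x :: "('a \<Rightarrow> 'b \<Rightarrow> 'a) \<Rightarrow> real \<Rightarrow> 'a \<Rightarrow> 'b \<Rightarrow> 'a \<Rightarrow> 'a::real_vector" where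
  "FF_grad_x gx r1 x y z = gx x y + r1 *\<^sub>R (x - z)"

definition FF_grad_y :: "('a \<Rightarrow> 'b \<Rightarrow> 'b) \<Rightarrow> real \<Rightarrow> 'a \<Rightarrow> 'b \<Rightarrow> 'b \<Rightarrow> 'b::real_vector" where
  "FF_grad_y gy r2 x y v = gy x y - r2 *\<^sub>R (y - v)"

locale lipschitz_gradient_minimax =
  fixes f :: "'a::euclidean_space \<Rightarrow> 'b::euclidean_space \<Rightarrow> real"
    and gx :: "'a \<Rightarrow> 'b \<Rightarrow> 'a" and gy :: "'a \<Rightarrow> 'b \<Rightarrow> 'b"
    and X :: "'a set" and Y :: "'b set"
    and Lx Ly r1 r2 :: real
  assumes X: "X \<noteq> {}" "convex X" "compact X"
    and Y: "Y \<noteq> {}" "convex Y" "compact Y"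
    and grad: "\<And>a b. ((\<lambda>p. f (fst p) (snd p)) has_derivative
                  (\<lambda>h. gx a b \<bullet> fst h + gy a b \<bullet> snd h)) (at (a, b))"
    and Lpos: "Lx > 0" "Ly > 0"
    and Lip_x: "\<And>a a' b b'. a \<in> X \<Longrightarrow> a' \<in> X \<Longrightarrow> b \<in> Y \<Longrightarrow> b' \<in> Y \<Longrightarrow>
                 norm (gx a b - gx a' b') \<le> Lx * (norm (a - a') + norm (b - b'))"
    and Lip_y: "\<And>a a' b b'. a \<in> X \<Longrightarrow> a' \<in> X \<Longrightarrow> b \<in> Y \<Longrightarrow> b' \<in> Y \<Longrightarrow>
                 norm (gy a b - gy a' b') \<le> Ly * (norm (a - a') + norm (b - b'))"
    and r: "r1 > Lx" "r2 > Ly"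
begin

abbreviation xo :: "'b \<Rightarrow> 'a \<Rightarrow> 'b \<Rightarrow> 'a" where
  "xo y z v \<equiv> xopt f r1 r2 X y z v"

text \<open>Danskin's gradient of \<open>d(\<cdot>, z, v)\<close>.\<close>

abbreviation grad_d :: "'b \<Rightarrow> 'a \<Rightarrow> 'b \<Rightarrow> 'b" where
  "grad_d y z v \<equiv> FF_grad_y gy r2 (xo y z v) y v"

lemma f_has_derivative_x: "((\<lambda>x. f x y) has_derivative (\<lambda>h. gx x y \<bullet> h)) (at x)"
proof -
  have "((\<lambda>x. (x, y)) has_derivative (\<lambda>h. (h, 0))) (at x)"
    by (rule derivative_eq_intros refl)+
  from has_derivative_compose[OF this grad] show ?thesis by (simp add: o_def)
qed

lemma f_has_derivative_y: "((\<lambda>y. f x y) has_derivative (\<lambda>h. gy x y \<bullet> h)) (at y)"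
proof -
  have "((\<lambda>y. (x, y)) has_derivative (\<lambda>h. (0, h))) (at y)"
    by (rule derivative_eq_intros refl)+
  from has_derivative_compose[OF this grad] show ?thesis by (simp add: o_def)
qed

lemma continuous_on_FF:
  assumes "continuous_on S a" "continuous_on S b"
  shows "continuous_on S (\<lambda>s. FF f r1 r2 (a s) (b s) z v)"
proof -
  have "continuous_on UNIV (\<lambda>p. f (fst p) (snd p))"
    using has_derivative_continuous[OF grad] by (simp add: continuous_at_imp_continuous_on)
  from continuous_on_compose2[OF this continuous_on_Pair[OF assms]]
  have "continuous_on S (\<lambda>s. f (a s) (b s))" by simp
  then show ?thesis unfolding FF_def by (intro continuous_intros assms)
qed

lemma FF_x_strongly_convex_smooth:
  assumes y: "y \<in> Y"
  shows "strongly_convex_smooth_on X (r1 - Lx) (r1 + Lx)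
           (\<lambda>x. FF f r1 r2 x y z v) (\<lambda>x. FF_grad_x gx r1 x y z)"
  unfolding strongly_convex_smooth_on_def
proof (intro ballI)
  fix a b assume ab: "a \<in> X" "b \<in> X"
  define E where "E = f b y - f a y - gx a y \<bullet> (b - a)"
  define N where "N = (norm (b - a))\<^sup>2"
  have "\<bar>E\<bar> \<le> Lx / 2 * N" unfolding E_def N_def
    by (rule descent_lemma[OF f_has_derivative_x X(2) ab]) (use Lip_x[OF _ _ y y] in simp)
  moreover have "FF f r1 r2 b y z v - FF f r1 r2 a y z v - FF_grad_x gx r1 a y z \<bullet> (b - a)
                 = E + r1 / 2 * N"
  proof -
    have dn: "(norm (b - z))\<^sup>2 = (norm (a - z))\<^sup>2 + 2 * ((a - z) \<bullet> (b - a)) + N"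
      using dot_norm[of "a - z" "b - a"] unfolding N_def by simp
    show ?thesis unfolding FF_def FF_grad_x_def E_def dn
      by (simp add: inner_add_left algebra_simps)
  qed
  ultimately show "FF f r1 r2 a y z v + FF_grad_x gx r1 a y z \<bullet> (b - a) + (r1 - Lx) / 2 * N
                     \<le> FF f r1 r2 b y z v
                   \<and> FF f r1 r2 b y z v \<le> FF f r1 r2 a y z v + FF_grad_x gx r1 a y z \<bullet> (b - a)
                     + (r1 + Lx) / 2 * N"
    by (simp add: field_simps) arith
qed

lemma FF_y_strongly_concave_smooth:
  assumes x: "x \<in> X"
  shows "strongly_convex_smooth_on Y (r2 - Ly) (r2 + Ly)
           (\<lambda>y. - FF f r1 r2 x y z v) (\<lambda>y. - FF_grad_y gy r2 x y v)"
  unfolding strongly_convex_smooth_on_def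
proof (intro ballI)
  fix a b assume ab: "a \<in> Y" "b \<in> Y"
  define E where "E = f x b - f x a - gy x a \<bullet> (b - a)"
  define N where "N = (norm (b - a))\<^sup>2"
  have "\<bar>E\<bar> \<le> Ly / 2 * N" unfolding E_def N_def
    by (rule descent_lemma[OF f_has_derivative_y Y(2) ab]) (use Lip_y[OF x x] in simp)
  moreover have "FF f r1 r2 x b z v - FF f r1 r2 x a z v - FF_grad_y gy r2 x a v \<bullet> (b - a)
                 = E - r2 / 2 * N"
  proof -
    have dn: "(norm (b - v))\<^sup>2 = (norm (a - v))\<^sup>2 + 2 * ((a - v) \<bullet> (b - a)) + N"
      using dot_norm[of "a - v" "b - a"] unfolding N_def by simp
    show ?thesis unfolding FF_def FF_grad_y_def E_def dn
      by (simp add: algebra_simps)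
  qed
  ultimately show "- FF f r1 r2 x a z v + - FF_grad_y gy r2 x a v \<bullet> (b - a) + (r2 - Ly) / 2 * N
                     \<le> - FF f r1 r2 x b z v
                   \<and> - FF f r1 r2 x b z v \<le> - FF f r1 r2 x a z v + - FF_grad_y gy r2 x a v \<bullet> (b - a)
                     + (r2 + Ly) / 2 * N"
    by (simp add: field_simps) arith
qed

lemma xopt_minimizes:
  assumes "y \<in> Y"
  shows "xo y z v \<in> X \<and> (\<forall>x\<in>X. FF f r1 r2 (xo y z v) y z v \<le> FF f r1 r2 x y z v)"
  unfolding xopt_def
  by (rule theI'[OF strongly_convex_smooth_on_unique_minimizer[OF FF_x_strongly_convex_smooth[OF assms]]])
    (use r X in \<open>auto intro: continuous_on_FF continuous_intros\<close>)

lemma xopt_variational_ineq: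
  assumes "y \<in> Y" "q \<in> X"
  shows "0 \<le> FF_grad_x gx r1 (xo y z v) y z \<bullet> (q - xo y z v)"
  using strongly_convex_smooth_on_minimizer_variational_ineq[OF FF_x_strongly_convex_smooth X(2)]
    xopt_minimizes assms by blast

lemma xopt_growth:
  assumes "y \<in> Y" "x \<in> X"
  shows "FF f r1 r2 (xo y z v) y z v + (r1 - Lx) / 2 * (norm (x - xo y z v))\<^sup>2 \<le> FF f r1 r2 x y z v"
  using strongly_convex_smooth_on_minimizer_growth[OF FF_x_strongly_convex_smooth X(2)]
    xopt_minimizes assms by blast

lemma yopt_maximizes:
  assumes "x \<in> X"
  shows "yopt f r1 r2 Y x z v \<in> Y \<and> (\<forall>y\<in>Y. FF f r1 r2 x y z v \<le> FF f r1 r2 x (yopt f r1 r2 Y x z v) z v)"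
proof -
  have "\<exists>!b. b \<in> Y \<and> (\<forall>y\<in>Y. - FF f r1 r2 x b z v \<le> - FF f r1 r2 x y z v)"
    by (rule strongly_convex_smooth_on_unique_minimizer[OF FF_y_strongly_concave_smooth[OF assms]])
      (use r Y in \<open>auto intro!: continuous_on_minus continuous_on_FF continuous_intros\<close>)
  then show ?thesis unfolding yopt_def neg_le_iff_le by (rule theI')
qed

lemma yopt_variational_ineq:
  assumes "x \<in> X" "q \<in> Y"
  shows "0 \<le> - FF_grad_y gy r2 x (yopt f r1 r2 Y x z v) v \<bullet> (q - yopt f r1 r2 Y x z v)"
  using strongly_convex_smooth_on_minimizer_variational_ineq[OF FF_y_strongly_concave_smooth Y(2)]
    yopt_maximizes assms by fastforce

text \<open>Adding the quadratic growth of \<open>F\<close> around \<open>x(y1)\<close> and around \<open>x(y2)\<close> leaves a mixed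
  difference of \<open>f\<close>, which the mean value theorem bounds through the Lipschitz dependence of
  \<open>gy\<close> on \<open>x\<close>; hence the constant involves \<open>Ly\<close>, not \<open>Lx\<close>.\<close>

lemma xopt_lipschitz:
  assumes y1: "y1 \<in> Y" and y2: "y2 \<in> Y"
  shows "norm (xo y1 z v - xo y2 z v) \<le> Ly / (r1 - Lx) * norm (y1 - y2)"
proof -
  define a where "a = xo y1 z v"
  define b where "b = xo y2 z v"
  have a: "a \<in> X" and b: "b \<in> X" unfolding a_def b_def using xopt_minimizes y1 y2 by auto
  define N where "N = norm (a - b)"
  have "norm ((\<lambda>y. f b y - f a y) y1 - (\<lambda>y. f b y - f a y) y2) \<le> Ly * N * norm (y1 - y2)"
  proof (rule differentiable_bound[OF Y(2) _ _ y1 y2])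
    fix y assume y: "y \<in> Y"
    show "((\<lambda>y. f b y - f a y) has_derivative (\<lambda>h. (gy b y - gy a y) \<bullet> h)) (at y within Y)"
      using has_derivative_diff[OF f_has_derivative_y f_has_derivative_y]
      by (simp add: inner_diff_left has_derivative_at_withinI)
    have "onorm (\<lambda>h. (gy b y - gy a y) \<bullet> h) \<le> norm (gy b y - gy a y)"
      by (rule onorm_bound) (simp_all add: Cauchy_Schwarz_ineq2)
    also have "\<dots> \<le> Ly * N" using Lip_y[OF b a y y] unfolding N_def by (simp add: norm_minus_commute)
    finally show "onorm (\<lambda>h. (gy b y - gy a y) \<bullet> h) \<le> Ly * N" .
  qed
  moreover have "(r1 - Lx) * N\<^sup>2 \<le> (f b y1 - f a y1) - (f b y2 - f a y2)"
    using xopt_growth[OF y1 b, of z v] xopt_growth[OF y2 a, of z v]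
    unfolding a_def[symmetric] b_def[symmetric] N_def FF_def
    by (simp add: norm_minus_commute field_simps)
  ultimately have "(r1 - Lx) * N\<^sup>2 \<le> (Ly * norm (y1 - y2)) * N" by (simp add: mult_ac)
  then have "(r1 - Lx) * N \<le> Ly * norm (y1 - y2)"
    using mult_le_of_mult_square_le[of N] Lpos unfolding N_def by simp
  then show ?thesis using r unfolding N_def a_def b_def by (simp add: pos_le_divide_eq mult.commute)
qed

lemma dfun_eq:
  assumes "y \<in> Y"
  shows "dfun f r1 r2 X y z v = FF f r1 r2 (xo y z v) y z v"
  unfolding dfun_def
proof (rule antisym)
  have "bdd_below ((\<lambda>x. FF f r1 r2 x y z v) ` X)"
    using xopt_minimizes[OF assms, of z v] by (intro bdd_belowI2[where m = "FF f r1 r2 (xo y z v) y z v"]) blast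
  then show "(INF x\<in>X. FF f r1 r2 x y z v) \<le> FF f r1 r2 (xo y z v) y z v"
    using xopt_minimizes[OF assms] by (blast intro: cINF_lower)
  show "FF f r1 r2 (xo y z v) y z v \<le> (INF x\<in>X. FF f r1 r2 x y z v)"
    using xopt_minimizes[OF assms] X(1) by (blast intro: cINF_greatest)
qed

lemma dfun_strongly_concave_smooth:
  "strongly_convex_smooth_on Y (r2 - Ly) (r2 + Ly + 2 * Ly * Ly / (r1 - Lx))
     (\<lambda>y. - dfun f r1 r2 X y z v) (\<lambda>y. - grad_d y z v)"
  unfolding strongly_convex_smooth_on_def
proof (intro ballI conjI)
  txt \<open>The upper bound freezes the inner minimizer at \<open>x(a)\<close>; the lower bound freezes it at
    \<open>x(b)\<close> and pays for the change of gradient through the Lipschitz continuity of \<open>x(\<cdot>)\<close>.\<close>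
  fix a b assume ab: "a \<in> Y" "b \<in> Y"
  let ?F = "\<lambda>x y. FF f r1 r2 x y z v" and ?h = "b - a"
  have "- ?F (xo a z v) a + - grad_d a z v \<bullet> ?h + (r2 - Ly) / 2 * (norm ?h)\<^sup>2 \<le> - ?F (xo a z v) b"
    using strongly_convex_smooth_onD(1)[OF FF_y_strongly_concave_smooth ab] xopt_minimizes[OF ab(1)] by blast
  moreover have "?F (xo b z v) b \<le> ?F (xo a z v) b" using xopt_minimizes[OF ab(2)] xopt_minimizes[OF ab(1)] by blast
  ultimately show "- dfun f r1 r2 X a z v + - grad_d a z v \<bullet> ?h + (r2 - Ly) / 2 * (norm ?h)\<^sup>2
                   \<le> - dfun f r1 r2 X b z v"
    using dfun_eq ab by simp
  have "- ?F (xo b z v) b \<le> - ?F (xo b z v) a + - FF_grad_y gy r2 (xo b z v) a v \<bullet> ?h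
                               + (r2 + Ly) / 2 * (norm ?h)\<^sup>2"
    using strongly_convex_smooth_onD(2)[OF FF_y_strongly_concave_smooth ab] xopt_minimizes[OF ab(2)] by blast
  moreover have "?F (xo a z v) a \<le> ?F (xo b z v) a" using xopt_minimizes[OF ab(1)] xopt_minimizes[OF ab(2)] by blast
  moreover have "(grad_d a z v - FF_grad_y gy r2 (xo b z v) a v) \<bullet> ?h \<le> Ly * Ly / (r1 - Lx) * (norm ?h)\<^sup>2"
  proof -
    have "(grad_d a z v - FF_grad_y gy r2 (xo b z v) a v) \<bullet> ?h
          \<le> norm (gy (xo a z v) a - gy (xo b z v) a) * norm ?h"
      using Cauchy_Schwarz_ineq2[of "gy (xo a z v) a - gy (xo b z v) a" ?h]
      unfolding FF_grad_y_def by (simp add: abs_le_iff)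
    also have "\<dots> \<le> Ly * norm (xo a z v - xo b z v) * norm ?h"
      using Lip_y[of "xo a z v" "xo b z v" a a] xopt_minimizes ab by (intro mult_right_mono) auto
    also have "\<dots> \<le> Ly * (Ly / (r1 - Lx) * norm ?h) * norm ?h"
      using xopt_lipschitz[OF ab(1,2), of z v] Lpos
      by (intro mult_right_mono mult_left_mono) (auto simp: norm_minus_commute)
    finally show ?thesis by (simp add: power2_eq_square)
  qed
  moreover have "(r2 + Ly + 2 * Ly * Ly / (r1 - Lx)) / 2 * (norm ?h)\<^sup>2
                 = (r2 + Ly) / 2 * (norm ?h)\<^sup>2 + Ly * Ly / (r1 - Lx) * (norm ?h)\<^sup>2"
    using r by (simp add: field_simps)
  ultimately show "- dfun f r1 r2 X b z v \<le> - dfun f r1 r2 X a z v + - grad_d a z v \<bullet> ?h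
                   + (r2 + Ly + 2 * Ly * Ly / (r1 - Lx)) / 2 * (norm ?h)\<^sup>2"
    using dfun_eq[OF ab(1), of z v] dfun_eq[OF ab(2), of z v]
    unfolding inner_diff_left inner_minus_left by linarith
qed

lemma continuous_on_dfun: "continuous_on Y (\<lambda>y. dfun f r1 r2 X y z v)"
proof -
  have "(Ly / (r1 - Lx))-lipschitz_on Y (\<lambda>y. xo y z v)"
    using xopt_lipschitz r Lpos by (intro lipschitz_onI) (auto simp: dist_norm)
  then have "continuous_on Y (\<lambda>y. FF f r1 r2 (xo y z v) y z v)"
    by (intro continuous_on_FF lipschitz_on_continuous_on continuous_on_id)
  then show ?thesis by (rule continuous_on_cong[THEN iffD1, rotated 2]) (simp_all add: dfun_eq)
qed

lemma yzv_maximizes: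
  "yzv f r1 r2 X Y z v \<in> Y \<and> (\<forall>y\<in>Y. dfun f r1 r2 X y z v \<le> dfun f r1 r2 X (yzv f r1 r2 X Y z v) z v)"
proof -
  have "\<exists>!b. b \<in> Y \<and> (\<forall>y\<in>Y. - dfun f r1 r2 X b z v \<le> - dfun f r1 r2 X y z v)"
    by (rule strongly_convex_smooth_on_unique_minimizer[OF dfun_strongly_concave_smooth])
      (use r Y continuous_on_dfun in \<open>auto intro: continuous_on_minus\<close>)
  then show ?thesis unfolding yzv_def neg_le_iff_le by (rule theI')
qed

lemma yzv_variational_ineq:
  assumes "q \<in> Y"
  shows "0 \<le> - grad_d (yzv f r1 r2 X Y z v) z v \<bullet> (q - yzv f r1 r2 X Y z v)"
  using strongly_convex_smooth_on_minimizer_variational_ineq[OF dfun_strongly_concave_smooth Y(2)]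
    yzv_maximizes assms by fastforce

lemma grad_d_lipschitz:
  assumes y1: "y1 \<in> Y" and y2: "y2 \<in> Y"
  shows "norm (grad_d y1 z v - grad_d y2 z v) \<le> (Ly * Ly / (r1 - Lx) + Ly + r2) * norm (y1 - y2)"
proof -
  have "grad_d y1 z v - grad_d y2 z v = (gy (xo y1 z v) y1 - gy (xo y2 z v) y2) - r2 *\<^sub>R (y1 - y2)"
    unfolding FF_grad_y_def by (simp add: algebra_simps)
  then have "norm (grad_d y1 z v - grad_d y2 z v)
             \<le> Ly * (norm (xo y1 z v - xo y2 z v) + norm (y1 - y2)) + r2 * norm (y1 - y2)"
    using norm_triangle_ineq4[of "gy (xo y1 z v) y1 - gy (xo y2 z v) y2" "r2 *\<^sub>R (y1 - y2)"]
      Lip_y[of "xo y1 z v" "xo y2 z v" y1 y2] xopt_minimizes assms r Lpos by auto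
  also have "\<dots> \<le> Ly * (Ly / (r1 - Lx) * norm (y1 - y2) + norm (y1 - y2)) + r2 * norm (y1 - y2)"
    using xopt_lipschitz[OF y1 y2, of z v] Lpos by (simp add: mult_left_mono)
  finally show ?thesis by (simp add: algebra_simps)
qed

lemma FF_grad_x_lipschitz:
  assumes "a \<in> X" "b \<in> X" "y \<in> Y"
  shows "norm (FF_grad_x gx r1 a y z - FF_grad_x gx r1 b y z) \<le> (r1 + Lx) * norm (a - b)"
proof -
  have "norm (FF_grad_x gx r1 a y z - FF_grad_x gx r1 b y z) = norm ((gx a y - gx b y) + r1 *\<^sub>R (a - b))"
    unfolding FF_grad_x_def by (rule arg_cong[where f = norm]) (simp add: algebra_simps)
  also have "\<dots> \<le> norm (gx a y - gx b y) + r1 * norm (a - b)"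
    using norm_triangle_ineq[of "gx a y - gx b y" "r1 *\<^sub>R (a - b)"] r Lpos by simp
  also have "\<dots> \<le> (r1 + Lx) * norm (a - b)"
    using Lip_x[OF assms(1,2,3,3)] by (simp add: algebra_simps)
  finally show ?thesis .
qed

lemma FF_grad_y_lipschitz:
  assumes "a \<in> Y" "b \<in> Y" "x \<in> X"
  shows "norm (FF_grad_y gy r2 x a v - FF_grad_y gy r2 x b v) \<le> (r2 + Ly) * norm (a - b)"
proof -
  have "norm (FF_grad_y gy r2 x a v - FF_grad_y gy r2 x b v) = norm ((gy x a - gy x b) - r2 *\<^sub>R (a - b))"
    unfolding FF_grad_y_def by (rule arg_cong[where f = norm]) (simp add: algebra_simps)
  also have "\<dots> \<le> norm (gy x a - gy x b) + r2 * norm (a - b)"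
    using norm_triangle_ineq4[of "gy x a - gy x b" "r2 *\<^sub>R (a - b)"] r Lpos by simp
  also have "\<dots> \<le> (r2 + Ly) * norm (a - b)"
    using Lip_y[OF assms(3,3,1,2)] by (simp add: algebra_simps)
  finally show ?thesis .
qed

lemma descent_step_error:
  fixes z :: 'a
  assumes x: "x \<in> X" and y: "y \<in> Y" and "c > 0"
  defines "x' \<equiv> closest_point X (x - c *\<^sub>R FF_grad_x gx r1 x y z)"
  shows "norm (x' - xo y z v) \<le> (2 * c * r1 + 1) / (c * r1 - c * Lx) * norm (x' - x)"
proof -
  have "norm (x' - xo y z v) \<le> (c * (2 * r1) + 1) / (c * (r1 - Lx)) * norm (x' - x)"
    unfolding x'_def
  proof (rule projected_step_dist_solution_le)
    fix a b assume ab: "a \<in> X" "b \<in> X"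
    show "(r1 - Lx) * (norm (a - b))\<^sup>2
          \<le> (FF_grad_x gx r1 a y z - FF_grad_x gx r1 b y z) \<bullet> (a - b)"
      by (rule strongly_convex_smooth_on_strongly_monotone[OF FF_x_strongly_convex_smooth[OF y] ab])
    show "norm (FF_grad_x gx r1 a y z - FF_grad_x gx r1 b y z) \<le> 2 * r1 * norm (a - b)"
      using FF_grad_x_lipschitz[OF ab y, of z] mult_right_mono[of "r1 + Lx" "2 * r1" "norm (a - b)"] r
      by simp
  qed (use X xopt_variational_ineq xopt_minimizes x y r \<open>c > 0\<close> Lpos in \<open>auto intro: compact_imp_closed\<close>)
  then show ?thesis by (simp add: algebra_simps)
qed

lemma ascent_step_error:
  fixes v :: 'b
  assumes x: "x \<in> X" and y: "y \<in> Y" and "\<alpha> > 0"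
  defines "y' \<equiv> closest_point Y (y + \<alpha> *\<^sub>R FF_grad_y gy r2 x y v)"
  shows "norm (y' - yopt f r1 r2 Y x z v) \<le> (2 * \<alpha> * r2 + 1) / (\<alpha> * r2 - \<alpha> * Ly) * norm (y' - y)"
proof -
  have "y' = closest_point Y (y - \<alpha> *\<^sub>R (- FF_grad_y gy r2 x y v))" unfolding y'_def by simp
  also have "norm (\<dots> - yopt f r1 r2 Y x z v)
      \<le> (\<alpha> * (2 * r2) + 1) / (\<alpha> * (r2 - Ly)) * norm (\<dots> - y)"
  proof (rule projected_step_dist_solution_le)
    fix a b assume ab: "a \<in> Y" "b \<in> Y"
    show "(r2 - Ly) * (norm (a - b))\<^sup>2
          \<le> (- FF_grad_y gy r2 x a v - - FF_grad_y gy r2 x b v) \<bullet> (a - b)"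
      by (rule strongly_convex_smooth_on_strongly_monotone[OF FF_y_strongly_concave_smooth[OF x] ab])
    show "norm (- FF_grad_y gy r2 x a v - - FF_grad_y gy r2 x b v) \<le> 2 * r2 * norm (a - b)"
      using FF_grad_y_lipschitz[OF ab x, of v] mult_right_mono[of "r2 + Ly" "2 * r2" "norm (a - b)"] r
      by (simp add: norm_minus_commute)
  qed (use Y yopt_variational_ineq yopt_maximizes x y r \<open>\<alpha> > 0\<close> Lpos in \<open>auto intro: compact_imp_closed\<close>)
  finally show ?thesis unfolding y'_def by (simp add: algebra_simps)
qed

lemma dfun_argmax_error:
  assumes y: "y \<in> Y" and "\<alpha> > 0"
  shows "norm (yzv f r1 r2 X Y z v - y)
         \<le> (1 + \<alpha> * (Ly * ((Ly + r1 - Lx) / (r1 - Lx)) + Ly + r2)) / (\<alpha> * (r2 - Ly))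
           * norm (y - closest_point Y (y + \<alpha> *\<^sub>R grad_d y z v))"
proof -
  let ?Ld = "Ly * ((Ly + r1 - Lx) / (r1 - Lx)) + Ly + r2"
  have Ld: "Ly * Ly / (r1 - Lx) + Ly + r2 \<le> ?Ld"
    using r Lpos by (simp add: divide_right_mono mult_left_mono)
  have "norm (yzv f r1 r2 X Y z v - y) \<le> (1 + \<alpha> * ?Ld) / (\<alpha> * (r2 - Ly))
           * norm (y - closest_point Y (y - \<alpha> *\<^sub>R - grad_d y z v))"
  proof (rule dist_solution_le_projected_residual)
    fix a b assume ab: "a \<in> Y" "b \<in> Y"
    show "(r2 - Ly) * (norm (a - b))\<^sup>2 \<le> (- grad_d a z v - - grad_d b z v) \<bullet> (a - b)"
      by (rule strongly_convex_smooth_on_strongly_monotone[OF dfun_strongly_concave_smooth ab])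
    show "norm (- grad_d a z v - - grad_d b z v) \<le> ?Ld * norm (a - b)"
      using grad_d_lipschitz[OF ab, of z v] mult_right_mono[OF Ld, of "norm (a - b)"]
      by (simp add: norm_minus_commute)
  qed (use Y yzv_variational_ineq yzv_maximizes y r \<open>\<alpha> > 0\<close> Lpos in \<open>auto intro: compact_imp_closed\<close>)
  then show ?thesis by simp
qed

lemma ascent_step_perturbation:
  assumes x: "x \<in> X" and y: "y \<in> Y" and "\<alpha> > 0"
  shows "norm (closest_point Y (y + \<alpha> *\<^sub>R FF_grad_y gy r2 x y v) - closest_point Y (y + \<alpha> *\<^sub>R grad_d y z v))
         \<le> \<alpha> * Ly * norm (x - xo y z v)"
proof -
  have "norm (closest_point Y (y + \<alpha> *\<^sub>R FF_grad_y gy r2 x y v) - closest_point Y (y + \<alpha> *\<^sub>R grad_d y z v))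
        \<le> norm (\<alpha> *\<^sub>R (gy x y - gy (xo y z v) y))"
  proof -
    have "(y + \<alpha> *\<^sub>R FF_grad_y gy r2 x y v) - (y + \<alpha> *\<^sub>R grad_d y z v) = \<alpha> *\<^sub>R (gy x y - gy (xo y z v) y)"
      unfolding FF_grad_y_def by (simp add: algebra_simps)
    then show ?thesis
      using closest_point_lipschitz[OF Y(2) compact_imp_closed[OF Y(3)] Y(1)] by (metis dist_norm)
  qed
  also have "\<dots> \<le> \<alpha> * (Ly * norm (x - xo y z v))"
    using Lip_y[OF x _ y y, of "xo y z v"] xopt_minimizes[OF y] \<open>\<alpha> > 0\<close> by (auto intro: mult_left_mono)
  finally show ?thesis by (simp add: mult_ac)
qed

end

theorem lemma4:
  fixes f :: "'a::euclidean_space \<Rightarrow> 'b::euclidean_space \<Rightarrow> real"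
    and gx :: "'a \<Rightarrow> 'b \<Rightarrow> 'a" and gy :: "'a \<Rightarrow> 'b \<Rightarrow> 'b"
    and X :: "'a set" and Y :: "'b set"
    and Lx Ly r1 r2 c \<alpha> \<beta> \<mu> :: real
    and x z :: "nat \<Rightarrow> 'a" and y v :: "nat \<Rightarrow> 'b"
  assumes X: "X \<noteq> {}" "convex X" "compact X"
    and Y: "Y \<noteq> {}" "convex Y" "compact Y"
    and grad: "\<And>a b. ((\<lambda>p. f (fst p) (snd p)) has_derivative
                  (\<lambda>h. gx a b \<bullet> fst h + gy a b \<bullet> snd h)) (at (a, b))"
    and cont_gx: "continuous_on UNIV (\<lambda>p. gx (fst p) (snd p))"
    and cont_gy: "continuous_on UNIV (\<lambda>p. gy (fst p) (snd p))"
    and Lpos: "Lx > 0" "Ly > 0"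
    and Lip_x: "\<And>a a' b b'. a \<in> X \<Longrightarrow> a' \<in> X \<Longrightarrow> b \<in> Y \<Longrightarrow> b' \<in> Y \<Longrightarrow>
                 norm (gx a b - gx a' b') \<le> Lx * (norm (a - a') + norm (b - b'))"
    and Lip_y: "\<And>a a' b b'. a \<in> X \<Longrightarrow> a' \<in> X \<Longrightarrow> b \<in> Y \<Longrightarrow> b' \<in> Y \<Longrightarrow>
                 norm (gy a b - gy a' b') \<le> Ly * (norm (a - a') + norm (b - b'))"
    and r: "r1 > Lx" "r2 > Ly"
    and step: "c > 0" "\<alpha> > 0" "0 < \<beta>" "\<beta> < 1" "0 < \<mu>" "\<mu> < 1"
    and init: "x 0 \<in> X" "y 0 \<in> Y"
    and upd_x: "\<And>t. x (Suc t) = closest_point X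
                 (x t - c *\<^sub>R (gx (x t) (y t) + r1 *\<^sub>R (x t - z t)))"
    and upd_y: "\<And>t. y (Suc t) = closest_point Y
                 (y t + \<alpha> *\<^sub>R (gy (x (Suc t)) (y t) - r2 *\<^sub>R (y t - v t)))"
    and upd_z: "\<And>t. z (Suc t) = z t + \<beta> *\<^sub>R (x (Suc t) - z t)"
    and upd_v: "\<And>t. v (Suc t) = v t + \<mu> *\<^sub>R (y (Suc t) - v t)"
  defines "\<sigma>6 \<equiv> (2 * c * r1 + 1) / (c * r1 - c * Lx)"
    and "\<sigma>7 \<equiv> (2 * \<alpha> * r2 + 1) / (\<alpha> * r2 - \<alpha> * Ly)"
    and "\<sigma>8 \<equiv> (1 + \<alpha> * (Ly * ((Ly + r1 - Lx) / (r1 - Lx)) + Ly + r2)) / (\<alpha> * (r2 - Ly))"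
    and "yplus \<equiv> \<lambda>t. closest_point Y
           (y t + \<alpha> *\<^sub>R (gy (xopt f r1 r2 X (y t) (z t) (v t)) (y t) - r2 *\<^sub>R (y t - v t)))"
  shows "\<forall>t.
     norm (x (Suc t) - xopt f r1 r2 X (y t) (z t) (v t)) \<le> \<sigma>6 * norm (x (Suc t) - x t)
   \<and> norm (y (Suc t) - yopt f r1 r2 Y (x (Suc t)) (z t) (v t)) \<le> \<sigma>7 * norm (y (Suc t) - y t)
   \<and> norm (yzv f r1 r2 X Y (z t) (v t) - y t) \<le> \<sigma>8 * norm (y t - yplus t)
   \<and> norm (y (Suc t) - yplus t) \<le> Ly * \<alpha> * \<sigma>6 * norm (x t - x (Suc t))"
proof -
  txt \<open>Each estimate concerns a single step.\<close>
  interpret lipschitz_gradient_minimax f gx gy X Y Lx Ly r1 r2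
    using X Y grad Lpos Lip_x Lip_y r by unfold_locales auto
  have x_in: "x t \<in> X" and y_in: "y t \<in> Y" for t
    by (cases t; simp add: init upd_x upd_y X Y closest_point_in_set compact_imp_closed)+
  have x_step: "x (Suc t) = closest_point X (x t - c *\<^sub>R FF_grad_x gx r1 (x t) (y t) (z t))" for t
    by (simp add: upd_x FF_grad_x_def)
  have y_step: "y (Suc t) = closest_point Y (y t + \<alpha> *\<^sub>R FF_grad_y gy r2 (x (Suc t)) (y t) (v t))" for t
    by (simp add: upd_y FF_grad_y_def)
  have y_plus: "yplus t = closest_point Y (y t + \<alpha> *\<^sub>R grad_d (y t) (z t) (v t))" for t
    by (simp add: assms(31) FF_grad_y_def)
  show ?thesis
  proof (intro allI conjI)
    fix t
    show i: "norm (x (Suc t) - xo (y t) (z t) (v t)) \<le> \<sigma>6 * norm (x (Suc t) - x t)"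
      unfolding x_step assms(28) by (rule descent_step_error[OF x_in y_in step(1)])
    show "norm (y (Suc t) - yopt f r1 r2 Y (x (Suc t)) (z t) (v t)) \<le> \<sigma>7 * norm (y (Suc t) - y t)"
      unfolding y_step assms(29) by (rule ascent_step_error[OF x_in y_in step(2)])
    show "norm (yzv f r1 r2 X Y (z t) (v t) - y t) \<le> \<sigma>8 * norm (y t - yplus t)"
      unfolding y_plus assms(30) by (rule dfun_argmax_error[OF y_in step(2)])
    have "norm (y (Suc t) - yplus t) \<le> \<alpha> * Ly * norm (x (Suc t) - xo (y t) (z t) (v t))"
      unfolding y_step y_plus by (rule ascent_step_perturbation[OF x_in y_in step(2)])
    also have "\<dots> \<le> \<alpha> * Ly * (\<sigma>6 * norm (x (Suc t) - x t))"
      using i step Lpos by (intro mult_left_mono) auto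
    finally show "norm (y (Suc t) - yplus t) \<le> Ly * \<alpha> * \<sigma>6 * norm (x t - x (Suc t))"
      by (simp add: norm_minus_commute mult_ac)
  qed
qed

end
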